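(* Let $M\in\mathbb{R}^{n\times n}$ be symmetric with eigenvalues ordered so that $|\lambda_1|\ge|\lambda_2|\ge\cdots$, where $\lambda=\lambda_1>0$ and $\lambda_1>|\lambda_2|$. Let $u$ be the unit leading eigenvector and $l_2=|\lambda_2|/\lambda$. Let $0<\theta\le\frac1{40}(1-l_2)^{3/2}$, and let $Q\in\mathbb{R}^{n\times n}$ satisfy $\|Q-M\|_2\le\theta\|M\|_2$. Let $\nu\le1/20$, and let $x,x'\in\mathbb{R}^n$ satisfy: - $\|x\|=\|x'\|=1$; - $\langle u,x\rangle\ge0$ and $\langle u,x'\rangle\ge0$; - $\|\mathcal P_{u_\perp}(x)\|\le\nu$ and $\|\mathcal P_{u_\perp}(x')\|\le\nu$. Put $z=\mathcal P_{u_\perp}(x)$ and $z'=\mathcal P_{u_\perp}(x')$. Then $$\Big\|\mathcal P_{u_\perp}\Big(\frac{Qx}{\|Qx\|}-\frac{Qx'}{\|Qx'\|}\Big)\Big\|\le\big(l_2(1+3\nu^2)+3\theta\big)\|z-z'\|$$ and $$\Big\|\mathcal P_{u}\Big(\frac{Qx}{\|Qx\|}-\frac{Qx'}{\|Qx'\|}\Big)\Big\|\le(4\nu+4\theta)\|z-z'\|.$$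
   Context: $\mathcal P_u$ denotes the orthogonal projector onto the span of $u$, and $\mathcal P_{u_\perp}$ the orthogonal projector onto its orthogonal complement. $\|\cdot\|_2$ is the operator norm. *)

theory Defs
  imports "HOL-Analysis.Analysis"
begin

definition proj_u :: "real^'n \<Rightarrow> real^'n \<Rightarrow> real^'n" where
  "proj_u u y = (u \<bullet> y) *\<^sub>R u"

definition proj_uperp :: "real^'n \<Rightarrow> real^'n \<Rightarrow> real^'n" where
  "proj_uperp u y = y - (u \<bullet> y) *\<^sub>R u"

definition opnorm :: "real^'n^'n \<Rightarrow> real" where
  "opnorm A = onorm (\<lambda>x. A *v x)"

end

theory Submission
  imports Defs
begin

text \<open>Split vectors into their component along u and their component in the orthogonal complement.
  Since M is symmetric it preserves the complement, where it has norm at most |lam2| (a vector on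
  which M attains its norm there is an eigenvector of M^2, which forces the bound), and along u it
  multiplies by lam. For unit x in the cap around u, the vector Qx has norm at least
  lam (1 - 51/100 nu^2 - theta), its perpendicular part is at most lam (l2 nu + theta), and the
  axial coordinates of two such vectors differ by O(nu) times the distance of their perpendicular
  parts. Writing Qx/|Qx| - Qx'/|Qx'| as (Qx - Qx')/|Qx| plus a multiple of Qx' proportional to
  |Qx| - |Qx'|, and bounding the latter through the difference of the squared norms, both
  projections are controlled by |z - z'|.\<close>

lemma inner_symmetric_matrix:
  fixes M :: "real^'n^'n"
  assumes "transpose M = M"
  shows "(M *v v) \<bullet> w = v \<bullet> (M *v w)"
proof -
  have "(v v* transpose M) \<bullet> w = v \<bullet> (M *v w)"
    using assms dot_lmul_matrix[of v M w] by simp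
  then show ?thesis by simp
qed

lemma linear_proj_uperp: "linear (proj_uperp u)"
  by (rule linearI) (simp_all add: proj_uperp_def inner_add_right scaleR_add_left algebra_simps)

lemma linear_proj_u: "linear (proj_u u)"
  by (rule linearI) (simp_all add: proj_u_def inner_add_right scaleR_add_left)

lemma proj_uperp_decomp: "(u \<bullet> v) *\<^sub>R u + proj_uperp u v = v"
  unfolding proj_uperp_def by simp

lemma inner_proj_uperp:
  assumes "norm u = 1"
  shows "u \<bullet> proj_uperp u v = 0"
  using assms by (simp add: proj_uperp_def inner_diff_right dot_square_norm)

lemma norm_proj_u:
  assumes "norm u = 1"
  shows "norm (proj_u u v) = \<bar>u \<bullet> v\<bar>"
  using assms by (simp add: proj_u_def)

lemma norm_proj_u_le:
  assumes "norm u = 1"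
  shows "norm (proj_u u v) \<le> norm v"
  using Cauchy_Schwarz_ineq2[of u v] assms by (simp add: norm_proj_u)

lemma pythagoras_proj_uperp:
  assumes "norm u = 1"
  shows "(norm v)^2 = (u \<bullet> v)^2 + (norm (proj_uperp u v))^2"
proof -
  let ?p = "proj_uperp u v"
  have "((u \<bullet> v) *\<^sub>R u + ?p) \<bullet> ((u \<bullet> v) *\<^sub>R u + ?p) = (u \<bullet> v)^2 + ?p \<bullet> ?p"
    using inner_proj_uperp[OF assms, of v] assms
    by (simp add: inner_add_left inner_add_right inner_commute power2_eq_square norm_eq_1)
  then show ?thesis by (simp add: proj_uperp_decomp power2_norm_eq_inner)
qed

lemma norm_proj_uperp_le:
  assumes "norm u = 1"
  shows "norm (proj_uperp u v) \<le> norm v"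
proof -
  have "(norm (proj_uperp u v))^2 \<le> (norm v)^2"
    using pythagoras_proj_uperp[OF assms, of v] by simp
  then show ?thesis
    by (rule power2_le_imp_le) simp
qed

lemma quadratic_nonpos_imp_linear_coeff_zero:
  fixes b c :: real
  assumes "\<And>t. 2 * t * b + t^2 * c \<le> 0"
  shows "b = 0"
proof (rule ccontr)
  assume "b \<noteq> 0"
  define t where "t = b / (\<bar>c\<bar> + 1)"
  have pos: "\<bar>c\<bar> + 1 > 0" by simp
  have tb: "t * b > 0"
    using \<open>b \<noteq> 0\<close> pos unfolding t_def by (auto simp: zero_less_divide_iff zero_less_mult_iff)
  have "t^2 * \<bar>c\<bar> = t * b * (\<bar>c\<bar> / (\<bar>c\<bar> + 1))"
    using pos unfolding t_def by (simp add: power2_eq_square)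
  also have "\<dots> < t * b"
    using mult_strict_left_mono[of "\<bar>c\<bar> / (\<bar>c\<bar> + 1)" 1 "t * b"] tb pos by simp
  finally have "t^2 * \<bar>c\<bar> < t * b" .
  moreover have "- (t^2 * \<bar>c\<bar>) \<le> t^2 * c"
    using abs_ge_minus_self[of c] by (intro mult_left_mono[of "- \<bar>c\<bar>" c "t^2", simplified]) auto
  ultimately show False
    using assms[of t] tb by linarith
qed

lemma inner_add_scaleR_self:
  fixes a b :: "'a::real_inner"
  shows "(a + t *\<^sub>R b) \<bullet> (a + t *\<^sub>R b) = a \<bullet> a + 2 * t * (a \<bullet> b) + t^2 * (b \<bullet> b)"
  by (simp add: inner_add_left inner_add_right inner_commute[of b a] power2_eq_square algebra_simps)

lemma symmetric_norm_maximizer_eigen: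
  fixes M :: "real^'n^'n"
  assumes sym: "transpose M = M"
    and V: "subspace V" and invariant: "\<And>w. w \<in> V \<Longrightarrow> M *v w \<in> V"
    and bound: "\<And>w. w \<in> V \<Longrightarrow> norm (M *v w) \<le> s * norm w"
    and w0: "w0 \<in> V" "norm w0 = 1" "norm (M *v w0) = s"
  shows "M *v (M *v w0) = s^2 *\<^sub>R w0"
proof -
  define B where "B = M *v (M *v w0) - s^2 *\<^sub>R w0"
  have "B \<in> V"
    unfolding B_def using V invariant w0(1) by (intro subspace_diff subspace_scale) auto
  have MB: "(M *v w0) \<bullet> (M *v B) = B \<bullet> B + s^2 * (w0 \<bullet> B)"
    using inner_symmetric_matrix[OF sym, of "M *v w0" B]
    by (simp add: B_def inner_diff_left)
  \<comment> \<open>expand the bound at w0 + t B; by symmetry the linear term in t is 2 t |B|^2\<close>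
  have "2 * t * (B \<bullet> B) + t^2 * ((M *v B) \<bullet> (M *v B) - s^2 * (B \<bullet> B)) \<le> 0" for t
  proof -
    have "w0 + t *\<^sub>R B \<in> V"
      using V w0(1) \<open>B \<in> V\<close> by (intro subspace_add subspace_scale) auto
    then have "norm (M *v (w0 + t *\<^sub>R B)) \<le> s * norm (w0 + t *\<^sub>R B)"
      by (rule bound)
    then have "(norm (M *v w0 + t *\<^sub>R (M *v B)))^2 \<le> (s * norm (w0 + t *\<^sub>R B))^2"
      by (intro power_mono) (simp_all add: matrix_vector_right_distrib matrix_vector_mult_scaleR)
    then have "(M *v w0 + t *\<^sub>R (M *v B)) \<bullet> (M *v w0 + t *\<^sub>R (M *v B))
        \<le> s^2 * ((w0 + t *\<^sub>R B) \<bullet> (w0 + t *\<^sub>R B))"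
      by (simp add: power2_norm_eq_inner power_mult_distrib)
    moreover have "(M *v w0) \<bullet> (M *v w0) = s^2" and "w0 \<bullet> w0 = 1"
      using w0 by (simp_all add: power2_norm_eq_inner[symmetric])
    ultimately show ?thesis
      unfolding inner_add_scaleR_self MB by (simp add: algebra_simps)
  qed
  then have "B \<bullet> B = 0"
    by (rule quadratic_nonpos_imp_linear_coeff_zero)
  then show ?thesis
    by (simp add: B_def)
qed

lemma matrix_norm_attained_on_subspace:
  fixes M :: "real^'n^'n"
  assumes V: "subspace V" and w: "w \<in> V" "w \<noteq> 0"
  obtains w0 where "w0 \<in> V" "norm w0 = 1" "\<And>v. v \<in> V \<Longrightarrow> norm (M *v v) \<le> norm (M *v w0) * norm v"
proof -
  define S where "S = V \<inter> sphere 0 1"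
  have "compact S"
    unfolding S_def by (rule closed_Int_compact[OF closed_subspace[OF V] compact_sphere])
  moreover have "(1 / norm w) *\<^sub>R w \<in> S"
    using V w by (simp add: S_def subspace_scale)
  then have "S \<noteq> {}"
    by blast
  moreover have "continuous_on S (\<lambda>v. norm (M *v v))"
    by (intro continuous_on_norm linear_continuous_on matrix_vector_mul_bounded_linear)
  ultimately obtain w0 where w0: "w0 \<in> S" and max: "\<And>v. v \<in> S \<Longrightarrow> norm (M *v v) \<le> norm (M *v w0)"
    by (metis continuous_attains_sup)
  have "norm (M *v v) \<le> norm (M *v w0) * norm v" if "v \<in> V" for v
  proof (cases "v = 0")
    case False
    then have "norm (M *v ((1 / norm v) *\<^sub>R v)) \<le> norm (M *v w0)"
      using that V max[of "(1 / norm v) *\<^sub>R v"] by (simp add: S_def subspace_scale)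
    then show ?thesis
      using False by (simp add: matrix_vector_mult_scaleR field_simps)
  qed simp
  moreover have "w0 \<in> V" "norm w0 = 1"
    using w0 by (simp_all add: S_def)
  ultimately show thesis
    using that by blast
qed

text \<open>Where M attains its norm s on the complement of u we have M (M w0) = s^2 w0, so
  M w0 + s w0 is either zero or an eigenvector for s; either way s \<le> |lam2|.\<close>
lemma symmetric_perp_eigen_bound:
  fixes M :: "real^'n^'n"
  assumes sym: "transpose M = M" and u_eig: "M *v u = lam *\<^sub>R u"
    and lam2_max: "\<And>mu v. v \<noteq> 0 \<Longrightarrow> u \<bullet> v = 0 \<Longrightarrow> M *v v = mu *\<^sub>R v \<Longrightarrow> \<bar>mu\<bar> \<le> \<bar>lam2\<bar>"
    and w: "u \<bullet> w = 0"
  shows "norm (M *v w) \<le> \<bar>lam2\<bar> * norm w"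
proof (cases "w = 0")
  case False
  have invariant: "M *v v \<in> {v. u \<bullet> v = 0}" if "v \<in> {v. u \<bullet> v = 0}" for v
    using that inner_symmetric_matrix[OF sym, of u v] u_eig by simp
  obtain w0 where w0: "u \<bullet> w0 = 0" "norm w0 = 1"
    and bound: "\<And>v. u \<bullet> v = 0 \<Longrightarrow> norm (M *v v) \<le> norm (M *v w0) * norm v"
    using matrix_norm_attained_on_subspace[OF subspace_hyperplane, of w u M] w False by auto
  define s where "s = norm (M *v w0)"
  have sq: "M *v (M *v w0) = s^2 *\<^sub>R w0"
    by (rule symmetric_norm_maximizer_eigen[OF sym subspace_hyperplane invariant])
      (use bound w0 in \<open>auto simp: s_def\<close>)
  have "\<bar>s\<bar> \<le> \<bar>lam2\<bar>"
  proof (cases "M *v w0 + s *\<^sub>R w0 = 0")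
    case True
    then have "M *v w0 = (- s) *\<^sub>R w0"
      by (simp add: eq_neg_iff_add_eq_0)
    moreover have "w0 \<noteq> 0"
      using w0 by auto
    ultimately show ?thesis
      using lam2_max[of w0 "- s"] w0 by simp
  next
    case False
    have "M *v (M *v w0 + s *\<^sub>R w0) = s *\<^sub>R (M *v w0 + s *\<^sub>R w0)"
      unfolding matrix_vector_right_distrib matrix_vector_mult_scaleR sq
      by (simp add: scaleR_add_right power2_eq_square add.commute)
    moreover have "u \<bullet> (M *v w0 + s *\<^sub>R w0) = 0"
      using invariant w0 by (simp add: inner_add_right)
    ultimately show ?thesis
      using lam2_max[OF False] by simp
  qed
  then have "s * norm w \<le> \<bar>lam2\<bar> * norm w"
    by (intro mult_right_mono) auto
  then show ?thesis
    using bound[OF w] by (simp add: s_def)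
qed simp

lemma abs_power2_norm_diff_le:
  fixes p q :: "'a::real_normed_vector"
  shows "\<bar>(norm p)^2 - (norm q)^2\<bar> \<le> norm (p - q) * (norm p + norm q)"
proof -
  have "(norm p)^2 - (norm q)^2 = (norm p - norm q) * (norm p + norm q)"
    by (simp add: power2_eq_square algebra_simps)
  then have "\<bar>(norm p)^2 - (norm q)^2\<bar> = \<bar>norm p - norm q\<bar> * (norm p + norm q)"
    by (simp add: abs_mult)
  also have "\<dots> \<le> norm (p - q) * (norm p + norm q)"
    by (intro mult_right_mono norm_triangle_ineq3) simp
  finally show ?thesis .
qed

lemma abs_norm_add_power2_diff_le:
  fixes a b a' b' :: "'a::real_inner"
  shows "\<bar>(norm (a + b))^2 - (norm (a' + b'))^2\<bar>
    \<le> \<bar>(norm a)^2 - (norm a')^2\<bar> + norm (a - a') * norm (b + b') + norm (b - b') * norm (a + b + (a' + b'))"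
proof -
  have "(norm (a + b))^2 - (norm (a' + b'))^2
      = ((norm a)^2 - (norm a')^2) + (a - a') \<bullet> (b + b') + (b - b') \<bullet> (a + b + (a' + b'))"
    by (simp add: power2_norm_eq_inner inner_add_left inner_add_right inner_diff_left inner_diff_right
        inner_commute[of b a] inner_commute[of b' a'] inner_commute[of b a'] inner_commute[of b' a]
        inner_commute[of b' b])
  then show ?thesis
    using Cauchy_Schwarz_ineq2[of "a - a'" "b + b'"] Cauchy_Schwarz_ineq2[of "b - b'" "a + b + (a' + b')"]
    by linarith
qed

lemma norm_linear_normalized_diff_le:
  fixes P :: "'a::real_normed_vector \<Rightarrow> 'b::real_normed_vector"
  assumes "linear P" and "y \<noteq> 0" "y' \<noteq> 0"
  shows "norm (P ((1 / norm y) *\<^sub>R y - (1 / norm y') *\<^sub>R y'))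
     \<le> norm (P (y - y')) / norm y + \<bar>norm y - norm y'\<bar> / norm y * (norm (P y') / norm y')"
proof -
  define N N' where "N = norm y" and "N' = norm y'"
  have pos: "N > 0" "N' > 0"
    using assms by (auto simp: N_def N'_def)
  have "(1 / N) *\<^sub>R y - (1 / N') *\<^sub>R y' = (1 / N) *\<^sub>R (y - y') + ((N' - N) / (N * N')) *\<^sub>R y'"
    using pos by (simp add: algebra_simps diff_divide_distrib)
  then have "P ((1 / N) *\<^sub>R y - (1 / N') *\<^sub>R y') = (1 / N) *\<^sub>R P (y - y') + ((N' - N) / (N * N')) *\<^sub>R P y'"
    using assms(1) by (simp add: linear_add linear_scale)
  then have "norm (P ((1 / N) *\<^sub>R y - (1 / N') *\<^sub>R y'))
      \<le> \<bar>1 / N\<bar> * norm (P (y - y')) + \<bar>(N' - N) / (N * N')\<bar> * norm (P y')"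
    by (metis norm_scaleR norm_triangle_ineq)
  also have "\<dots> = norm (P (y - y')) / N + \<bar>N - N'\<bar> / N * (norm (P y') / N')"
    using pos by (simp add: abs_divide abs_minus_commute abs_mult)
  finally show ?thesis
    by (simp add: N_def N'_def)
qed

lemma norm_linear_normalized_diff_bound:
  fixes P :: "'a::real_normed_vector \<Rightarrow> 'b::real_normed_vector"
  assumes P: "linear P" and c: "0 < c" "c \<le> norm y" "c \<le> norm y'"
    and diff: "norm (P (y - y')) \<le> \<alpha>" and norms: "\<bar>norm y - norm y'\<bar> \<le> \<beta>"
    and ratio: "norm (P y') \<le> \<rho> * norm y'"
  shows "norm (P ((1 / norm y) *\<^sub>R y - (1 / norm y') *\<^sub>R y')) \<le> (\<alpha> + \<beta> * \<rho>) / c"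
proof -
  have pos: "0 < norm y" "0 < norm y'"
    using c by linarith+
  have "norm (P y') / norm y' \<le> \<rho>" and "0 \<le> norm (P y') / norm y'"
    using ratio pos by (simp_all add: divide_le_eq)
  then have second: "\<bar>norm y - norm y'\<bar> * (norm (P y') / norm y') \<le> \<beta> * \<rho>"
    using norms by (intro mult_mono) auto
  have "norm (P ((1 / norm y) *\<^sub>R y - (1 / norm y') *\<^sub>R y'))
      \<le> norm (P (y - y')) / norm y + \<bar>norm y - norm y'\<bar> / norm y * (norm (P y') / norm y')"
    using norm_linear_normalized_diff_le[OF P] pos by fastforce
  also have "\<dots> = (norm (P (y - y')) + \<bar>norm y - norm y'\<bar> * (norm (P y') / norm y')) / norm y"
    by (simp add: add_divide_distrib)
  also have "\<dots> \<le> (\<alpha> + \<beta> * \<rho>) / norm y"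
    using diff second pos by (intro divide_right_mono add_mono) auto
  also have "\<dots> \<le> (\<alpha> + \<beta> * \<rho>) / c"
  proof -
    have "0 \<le> \<bar>norm y - norm y'\<bar> * (norm (P y') / norm y')"
      by simp
    then have "0 \<le> \<alpha> + \<beta> * \<rho>"
      using second order_trans[OF norm_ge_zero diff] by linarith
    then show ?thesis
      using c pos by (intro divide_left_mono) auto
  qed
  finally show ?thesis .
qed

definition spherical_cap :: "real^'n \<Rightarrow> real \<Rightarrow> (real^'n) set" where
  "spherical_cap u nu = {x. norm x = 1 \<and> 0 \<le> u \<bullet> x \<and> norm (proj_uperp u x) \<le> nu}"

lemma nonneg_of_mem_spherical_cap: "x \<in> spherical_cap u nu \<Longrightarrow> 0 \<le> nu"
  unfolding spherical_cap_def by (auto intro: order_trans[OF norm_ge_zero])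

lemma power2_inner_in_spherical_cap:
  assumes "norm u = 1" "x \<in> spherical_cap u nu"
  shows "(u \<bullet> x)^2 = 1 - (norm (proj_uperp u x))^2"
  using pythagoras_proj_uperp[OF assms(1), of x] assms(2) by (simp add: spherical_cap_def)

lemma inner_lower_bound_in_spherical_cap:
  assumes u: "norm u = 1" and x: "x \<in> spherical_cap u nu" and nu: "nu \<le> 1/20"
  shows "1 - 51/100 * nu^2 \<le> u \<bullet> x"
proof (rule power2_le_imp_le)
  have "0 \<le> nu" "norm (proj_uperp u x) \<le> nu"
    using x nonneg_of_mem_spherical_cap by (auto simp: spherical_cap_def)
  then have "nu^2 \<le> 1/400" and "(norm (proj_uperp u x))^2 \<le> nu^2"
    using nu mult_mono[of nu "1/20" nu "1/20"] by (auto simp: power2_eq_square intro: mult_mono)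
  moreover have "(1 - 51/100 * nu^2)^2 = 1 - nu^2 - nu^2 * (2/100 - 2601/10000 * nu^2)"
    by (simp add: power2_eq_square algebra_simps)
  moreover from \<open>nu^2 \<le> 1/400\<close> have "0 \<le> nu^2 * (2/100 - 2601/10000 * nu^2)"
    by (intro mult_nonneg_nonneg) auto
  ultimately show "(1 - 51/100 * nu^2)^2 \<le> (u \<bullet> x)^2"
    using power2_inner_in_spherical_cap[OF u x] by linarith
  show "0 \<le> u \<bullet> x"
    using x by (simp add: spherical_cap_def)
qed

lemma abs_power2_inner_diff_in_spherical_cap:
  assumes u: "norm u = 1" and x: "x \<in> spherical_cap u nu" and x': "x' \<in> spherical_cap u nu"
  shows "\<bar>(u \<bullet> x)^2 - (u \<bullet> x')^2\<bar> \<le> 2 * nu * norm (proj_uperp u x - proj_uperp u x')"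
proof -
  let ?z = "proj_uperp u x" and ?z' = "proj_uperp u x'"
  have "\<bar>(u \<bullet> x)^2 - (u \<bullet> x')^2\<bar> = \<bar>(norm ?z)^2 - (norm ?z')^2\<bar>"
    using power2_inner_in_spherical_cap[OF u x] power2_inner_in_spherical_cap[OF u x'] by linarith
  also have "\<dots> \<le> norm (?z - ?z') * (norm ?z + norm ?z')"
    by (rule abs_power2_norm_diff_le)
  also have "\<dots> \<le> norm (?z - ?z') * (2 * nu)"
    using x x' by (intro mult_left_mono) (auto simp: spherical_cap_def)
  finally show ?thesis
    by (simp add: algebra_simps)
qed

lemma abs_inner_diff_in_spherical_cap:
  assumes u: "norm u = 1" and x: "x \<in> spherical_cap u nu" and x': "x' \<in> spherical_cap u nu"
    and nu: "nu \<le> 1/20"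
  shows "\<bar>u \<bullet> x - u \<bullet> x'\<bar> \<le> 101/100 * nu * norm (proj_uperp u x - proj_uperp u x')"
proof -
  define d where "d = norm (proj_uperp u x - proj_uperp u x')"
  have "0 \<le> nu"
    using x by (rule nonneg_of_mem_spherical_cap)
  have "nu^2 \<le> 1/400"
    using \<open>0 \<le> nu\<close> nu mult_mono[of nu "1/20" nu "1/20"] by (simp add: power2_eq_square)
  then have sum: "199/100 \<le> u \<bullet> x + u \<bullet> x'"
    using inner_lower_bound_in_spherical_cap[OF u x nu] inner_lower_bound_in_spherical_cap[OF u x' nu]
    by linarith
  have "(u \<bullet> x)^2 - (u \<bullet> x')^2 = (u \<bullet> x - u \<bullet> x') * (u \<bullet> x + u \<bullet> x')"
    by (simp add: power2_eq_square algebra_simps)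
  then have "\<bar>u \<bullet> x - u \<bullet> x'\<bar> * (u \<bullet> x + u \<bullet> x') = \<bar>(u \<bullet> x)^2 - (u \<bullet> x')^2\<bar>"
    using sum by (simp add: abs_mult)
  also have "\<dots> \<le> 2 * nu * d"
    unfolding d_def by (rule abs_power2_inner_diff_in_spherical_cap[OF u x x'])
  finally have "\<bar>u \<bullet> x - u \<bullet> x'\<bar> * (199/100) \<le> 2 * nu * d"
    using mult_left_mono[OF sum, of "\<bar>u \<bullet> x - u \<bullet> x'\<bar>"] by simp
  moreover have "0 \<le> nu * d"
    using \<open>0 \<le> nu\<close> by (simp add: d_def)
  ultimately show ?thesis
    by (simp add: d_def)
qed

lemma norm_diff_in_spherical_cap:
  assumes u: "norm u = 1" and x: "x \<in> spherical_cap u nu" and x': "x' \<in> spherical_cap u nu"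
    and nu: "nu \<le> 1/20"
  shows "norm (x - x') \<le> 106/100 * norm (proj_uperp u x - proj_uperp u x')"
proof -
  define d where "d = norm (proj_uperp u x - proj_uperp u x')"
  have "x - x' = (u \<bullet> x - u \<bullet> x') *\<^sub>R u + (proj_uperp u x - proj_uperp u x')"
    by (metis add_diff_add proj_uperp_decomp scaleR_diff_left)
  then have "norm (x - x') \<le> \<bar>u \<bullet> x - u \<bullet> x'\<bar> + d"
    using norm_triangle_ineq[of "(u \<bullet> x - u \<bullet> x') *\<^sub>R u"] u by (simp add: d_def)
  moreover have "nu * d \<le> d / 20"
    using nu mult_right_mono[of nu "1/20" d] by (simp add: d_def)
  moreover have "\<bar>u \<bullet> x - u \<bullet> x'\<bar> \<le> 101/100 * (nu * d)"
    using abs_inner_diff_in_spherical_cap[OF u x x' nu] by (simp add: d_def mult.assoc)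
  ultimately show ?thesis
    using norm_ge_zero[of "proj_uperp u x - proj_uperp u x'"] unfolding d_def by linarith
qed

lemma denominator_bounds:
  fixes nu theta K :: real
  assumes "0 < theta" "theta \<le> 1/40" "0 \<le> nu" "nu \<le> 1/20" and K: "K = 1 - 51/100 * nu^2 - theta"
  shows "9737/10000 \<le> K" "1/K \<le> 1 + 103/100 * (51/100 * nu^2 + theta)" "1/K \<le> 103/100"
    "1/K^2 \<le> 10609/10000"
proof -
  have nu2: "nu^2 \<le> 1/400"
    using assms mult_mono[of nu "1/20" nu "1/20"] by (simp add: power2_eq_square)
  define s where "s = 51/100 * nu^2 + theta"
  have s: "0 \<le> s" "s \<le> 263/10000" and Ks: "K = 1 - s"
    using nu2 assms by (auto simp: s_def)
  show K_ge: "9737/10000 \<le> K"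
    using Ks s by simp
  have "s * s \<le> s * (263/10000)"
    using s by (intro mult_left_mono) auto
  then have "103 * (s * s) \<le> 3 * s"
    using s by linarith
  then have "1 \<le> K * (1 + 103/100 * s)"
    unfolding Ks by (simp add: algebra_simps)
  then show "1/K \<le> 1 + 103/100 * (51/100 * nu^2 + theta)"
    using K_ge by (simp add: divide_le_eq mult.commute s_def)
  show inv: "1/K \<le> 103/100"
    using K_ge by (simp add: divide_le_eq)
  have "1/K^2 = (1/K) * (1/K)"
    by (simp add: power2_eq_square)
  also have "\<dots> \<le> (103/100) * (103/100)"
    using inv K_ge by (intro mult_mono) auto
  finally show "1/K^2 \<le> 10609/10000"
    by simp
qed

lemma norm_difference_term_le:
  fixes nu theta d D K :: real
  assumes "0 < theta" "theta \<le> 1/40" "0 \<le> nu" "nu \<le> 1/20" "0 \<le> d" "D \<le> 106/100 * d"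
    and K: "K = 1 - 51/100 * nu^2 - theta"
  shows "(2 * nu * d + theta * D) / K + theta * D \<le> (206/100 * nu + 216/100 * theta) * d"
proof -
  note K_bounds = denominator_bounds[OF assms(1-4) K]
  have thD: "theta * D \<le> 106/100 * (theta * d)"
    using mult_left_mono[OF assms(6), of theta] assms(1) by (simp add: algebra_simps)
  have "(2 * nu * d + theta * D) / K = (2 * nu * d + theta * D) * (1/K)"
    by simp
  also have "\<dots> \<le> (2 * nu * d + 106/100 * (theta * d)) * (103/100)"
    using K_bounds thD assms by (intro mult_mono) auto
  also have "\<dots> = 206/100 * (nu * d) + 10918/10000 * (theta * d)"
    by (simp add: algebra_simps)
  finally have "(2 * nu * d + theta * D) / K \<le> 206/100 * (nu * d) + 10918/10000 * (theta * d)" .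
  moreover have "(206/100 * nu + 216/100 * theta) * d = 206/100 * (nu * d) + 216/100 * (theta * d)"
    by (simp add: algebra_simps)
  moreover have "0 \<le> theta * d"
    using assms by simp
  ultimately show ?thesis
    using thD by linarith
qed

lemma perp_leading_coefficient_le:
  fixes l nu theta :: real
  assumes l: "0 \<le> l" "l \<le> 1" and theta: "0 < theta" "theta \<le> 1/40" and nu: "0 \<le> nu" "nu \<le> 1/20"
  shows "(l + 106/100 * theta) * (1 + 103/100 * (51/100 * nu^2 + theta))
    \<le> l + 5253/10000 * (l * nu^2) + 2119/1000 * theta"
proof -
  have "nu^2 \<le> 1/400"
    using nu mult_mono[of nu "1/20" nu "1/20"] by (simp add: power2_eq_square)
  then have "l * theta \<le> theta" "theta * nu^2 \<le> theta * (1/400)" "theta * theta \<le> theta * (1/40)"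
    using l theta by (auto simp: mult_left_le_one_le mult.commute intro: mult_left_mono)
  moreover have "(l + 106/100 * theta) * (1 + 103/100 * (51/100 * nu^2 + theta)) = l + 5253/10000 * (l * nu^2)
      + 103/100 * (l * theta) + 106/100 * theta + 556818/1000000 * (theta * nu^2) + 10918/10000 * (theta * theta)"
    by (simp add: field_simps)
  ultimately show ?thesis
    using theta by linarith
qed

lemma perp_correction_coefficient_le:
  fixes l nu theta :: real
  assumes l: "0 \<le> l" "l \<le> 1" and theta: "0 < theta" "theta \<le> 1/40" and nu: "0 \<le> nu" "nu \<le> 1/20"
  shows "(206/100 * nu + 216/100 * theta) * (l * nu + theta) * (10609/10000)
    \<le> 219/100 * (l * nu^2) + 29/100 * theta"
proof -
  have "nu * theta \<le> theta / 20"
    using nu theta mult_right_mono[of nu "1/20" theta] by simp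
  moreover have "l * nu * theta \<le> theta / 20"
  proof -
    have "l * nu \<le> 1 * (1/20)"
      using l nu by (intro mult_mono) auto
    then show ?thesis
      using theta mult_right_mono[of "l * nu" "1/20" theta] by simp
  qed
  moreover have "theta * theta \<le> theta / 40"
    using theta mult_left_mono[of theta "1/40" theta] by simp
  moreover have "0 \<le> l * nu^2"
    using l by simp
  moreover have "(206/100 * nu + 216/100 * theta) * (l * nu + theta) * (10609/10000)
      = 2185454/1000000 * (l * nu^2) + 2185454/1000000 * (nu * theta) + 2291544/1000000 * (l * nu * theta)
        + 2291544/1000000 * (theta * theta)"
    by (simp add: field_simps power2_eq_square)
  ultimately show ?thesis
    using theta by linarith
qed

lemma perp_contraction_arith:
  fixes l nu theta d D K :: real
  assumes l: "0 \<le> l" "l \<le> 1" and theta: "0 < theta" "theta \<le> 1/40" and nu: "0 \<le> nu" "nu \<le> 1/20"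
    and d: "0 \<le> d" and D: "0 \<le> D" "D \<le> 106/100 * d"
    and K: "K = 1 - 51/100 * nu^2 - theta"
  shows "((l * d + theta * D) + ((2 * nu * d + theta * D) / K + theta * D) * ((l * nu + theta) / K)) / K
    \<le> (l * (1 + 3 * nu^2) + 3 * theta) * d"
proof -
  note K_bounds = denominator_bounds[OF theta nu K]
  define R where "R = (2 * nu * d + theta * D) / K + theta * D"
  have K_pos: "0 < K"
    using K_bounds(1) by simp
  define s where "s = 51/100 * nu^2 + theta"
  have first: "(l * d + theta * D) / K \<le> (l + 106/100 * theta) * (1 + 103/100 * s) * d"
  proof -
    have "(l * d + theta * D) / K = (l * d + theta * D) * (1/K)"
      by simp
    also have "\<dots> \<le> (l + 106/100 * theta) * d * (1 + 103/100 * s)"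
    proof (rule mult_mono)
      show "l * d + theta * D \<le> (l + 106/100 * theta) * d"
        using mult_left_mono[OF D(2), of theta] theta by (simp add: algebra_simps)
    qed (use K_bounds l theta d K_pos in \<open>auto simp: s_def\<close>)
    finally show ?thesis
      by (simp add: mult_ac)
  qed
  have second: "R * ((l * nu + theta) / K) / K \<le> (206/100 * nu + 216/100 * theta) * (l * nu + theta) * (10609/10000) * d"
  proof -
    have "R * ((l * nu + theta) / K) / K = R * (l * nu + theta) * (1/K^2)"
      by (simp add: power2_eq_square)
    also have "\<dots> \<le> ((206/100 * nu + 216/100 * theta) * d) * (l * nu + theta) * (10609/10000)"
    proof (intro mult_mono)
      show "R \<le> (206/100 * nu + 216/100 * theta) * d"
        unfolding R_def using norm_difference_term_le[OF theta nu d D(2) K] .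
    qed (use K_bounds l nu theta d in auto)
    finally show ?thesis
      by (simp add: mult_ac)
  qed
  have "((l * d + theta * D) + R * ((l * nu + theta) / K)) / K
      = (l * d + theta * D) / K + R * ((l * nu + theta) / K) / K"
    by (simp add: add_divide_distrib)
  also have "\<dots> \<le> ((l + 106/100 * theta) * (1 + 103/100 * s)
      + (206/100 * nu + 216/100 * theta) * (l * nu + theta) * (10609/10000)) * d"
    using first second by (simp add: algebra_simps)
  also have "\<dots> \<le> (l + 5253/10000 * (l * nu^2) + 2119/1000 * theta + (219/100 * (l * nu^2) + 29/100 * theta)) * d"
    using perp_leading_coefficient_le[OF l theta nu] perp_correction_coefficient_le[OF l theta nu] d
    by (intro mult_right_mono add_mono) (auto simp: s_def)
  also have "\<dots> \<le> (l * (1 + 3 * nu^2) + 3 * theta) * d"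
  proof (rule mult_right_mono[OF _ d])
    have "0 \<le> l * nu^2" and "l * (1 + 3 * nu^2) = l + 3 * (l * nu^2)"
      using l by (simp_all add: algebra_simps)
    then show "l + 5253/10000 * (l * nu^2) + 2119/1000 * theta + (219/100 * (l * nu^2) + 29/100 * theta)
        \<le> l * (1 + 3 * nu^2) + 3 * theta"
      using theta by linarith
  qed
  finally show ?thesis
    by (simp add: R_def)
qed

lemma axial_contraction_arith:
  fixes nu theta d D K :: real
  assumes theta: "0 < theta" "theta \<le> 1/40" and nu: "0 \<le> nu" "nu \<le> 1/20"
    and d: "0 \<le> d" and D: "0 \<le> D" "D \<le> 106/100 * d"
    and K: "K = 1 - 51/100 * nu^2 - theta"
  shows "((101/100 * nu * d + theta * D) + ((2 * nu * d + theta * D) / K + theta * D)) / K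
    \<le> (4 * nu + 4 * theta) * d"
proof -
  note K_bounds = denominator_bounds[OF theta nu K]
  have "((101/100 * nu * d + theta * D) + ((2 * nu * d + theta * D) / K + theta * D)) / K
      = ((101/100 * nu * d + theta * D) + ((2 * nu * d + theta * D) / K + theta * D)) * (1/K)"
    by simp
  also have "\<dots> \<le> (101/100 * nu * d + 106/100 * (theta * d) + (206/100 * nu + 216/100 * theta) * d) * (103/100)"
  proof (rule mult_mono)
    have "theta * D \<le> 106/100 * (theta * d)"
      using mult_left_mono[OF D(2), of theta] theta by (simp add: algebra_simps)
    then show "101/100 * nu * d + theta * D + ((2 * nu * d + theta * D) / K + theta * D)
        \<le> 101/100 * nu * d + 106/100 * (theta * d) + (206/100 * nu + 216/100 * theta) * d"
      using norm_difference_term_le[OF theta nu d D(2) K] by linarith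
  qed (use K_bounds theta nu d in auto)
  also have "\<dots> = 31621/10000 * (nu * d) + 16583/5000 * (theta * d)"
    by (simp add: algebra_simps)
  also have "\<dots> \<le> (4 * nu + 4 * theta) * d"
  proof -
    have "0 \<le> nu * d" "0 \<le> theta * d" and "(4 * nu + 4 * theta) * d = 4 * (nu * d) + 4 * (theta * d)"
      using theta nu d by (simp_all add: algebra_simps)
    then show ?thesis
      by linarith
  qed
  finally show ?thesis .
qed

locale leading_eigenvector =
  fixes M :: "real^'n^'n" and u :: "real^'n" and lam L :: real
  assumes symmetric: "transpose M = M"
    and eigen: "M *v u = lam *\<^sub>R u" and unit: "norm u = 1" and lam_pos: "0 < lam"
    and perp_bound: "\<And>w. u \<bullet> w = 0 \<Longrightarrow> norm (M *v w) \<le> L * norm w"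
    and L_nonneg: "0 \<le> L" and L_le_lam: "L \<le> lam"
begin

lemma inner_eigen: "u \<bullet> (M *v w) = lam * (u \<bullet> w)"
  using inner_symmetric_matrix[OF symmetric, of u w] eigen by simp

lemma proj_uperp_matrix: "proj_uperp u (M *v w) = M *v proj_uperp u w"
  unfolding proj_uperp_def
  by (simp add: inner_eigen matrix_vector_mult_diff_distrib matrix_vector_mult_scaleR eigen)

lemma norm_matrix_proj_uperp_le: "norm (M *v proj_uperp u w) \<le> L * norm (proj_uperp u w)"
  by (rule perp_bound[OF inner_proj_uperp[OF unit]])

lemma power2_norm_matrix: "(norm (M *v w))^2 = lam^2 * (u \<bullet> w)^2 + (norm (M *v proj_uperp u w))^2"
  using pythagoras_proj_uperp[OF unit, of "M *v w"]
  by (simp add: inner_eigen proj_uperp_matrix power_mult_distrib)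

lemma norm_matrix_le: "norm (M *v w) \<le> lam * norm w"
proof (rule power2_le_imp_le)
  have "norm (M *v proj_uperp u w) \<le> lam * norm (proj_uperp u w)"
    using norm_matrix_proj_uperp_le[of w] mult_right_mono[OF L_le_lam norm_ge_zero] by (rule order_trans)
  then have "(norm (M *v proj_uperp u w))^2 \<le> (lam * norm (proj_uperp u w))^2"
    by (rule power_mono) simp
  moreover have "(lam * norm w)^2 = lam^2 * (u \<bullet> w)^2 + (lam * norm (proj_uperp u w))^2"
    using pythagoras_proj_uperp[OF unit, of w] by (simp add: power_mult_distrib algebra_simps)
  ultimately show "(norm (M *v w))^2 \<le> (lam * norm w)^2"
    using power2_norm_matrix[of w] by linarith
  show "0 \<le> lam * norm w"
    using lam_pos by simp
qed

lemma opnorm_le: "opnorm M \<le> lam"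
  unfolding opnorm_def by (rule onorm_le) (rule norm_matrix_le)

lemma norm_matrix_proj_uperp_in_spherical_cap:
  assumes "x \<in> spherical_cap u nu"
  shows "norm (M *v proj_uperp u x) \<le> L * nu"
  using norm_matrix_proj_uperp_le[of x] mult_left_mono[of "norm (proj_uperp u x)" nu L] assms L_nonneg
  by (simp add: spherical_cap_def)

lemma abs_power2_norm_matrix_diff_in_spherical_cap:
  assumes x: "x \<in> spherical_cap u nu" and x': "x' \<in> spherical_cap u nu"
  shows "\<bar>(norm (M *v x))^2 - (norm (M *v x'))^2\<bar> \<le> 4 * lam^2 * nu * norm (proj_uperp u x - proj_uperp u x')"
proof -
  define z z' where "z = proj_uperp u x" and "z' = proj_uperp u x'"
  define d where "d = norm (z - z')"
  have "0 \<le> nu"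
    using x by (rule nonneg_of_mem_spherical_cap)
  have Mz: "norm (M *v z) \<le> L * nu" "norm (M *v z') \<le> L * nu"
    using norm_matrix_proj_uperp_in_spherical_cap x x' by (simp_all add: z_def z'_def)
  have "u \<bullet> (z - z') = 0"
    using inner_proj_uperp[OF unit] by (simp add: z_def z'_def inner_diff_right)
  then have Mzz: "norm (M *v z - M *v z') \<le> L * d"
    using perp_bound[of "z - z'"] by (simp add: d_def matrix_vector_mult_diff_distrib)
  have "\<bar>(norm (M *v z))^2 - (norm (M *v z'))^2\<bar> \<le> norm (M *v z - M *v z') * (norm (M *v z) + norm (M *v z'))"
    by (rule abs_power2_norm_diff_le)
  also have "\<dots> \<le> (L * d) * (2 * (L * nu))"
    using Mz Mzz L_nonneg by (intro mult_mono) (auto simp: d_def)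
  also have "\<dots> = 2 * (L * L) * (nu * d)"
    by (simp add: mult_ac)
  also have "\<dots> \<le> 2 * (lam * lam) * (nu * d)"
    using mult_mono[OF L_le_lam L_le_lam] L_nonneg lam_pos \<open>0 \<le> nu\<close>
    by (intro mult_right_mono mult_left_mono) (auto simp: d_def)
  also have "\<dots> = 2 * lam^2 * (nu * d)"
    by (simp add: power2_eq_square)
  finally have perp_part: "\<bar>(norm (M *v z))^2 - (norm (M *v z'))^2\<bar> \<le> 2 * lam^2 * (nu * d)" .
  have "\<bar>lam^2 * (u \<bullet> x)^2 - lam^2 * (u \<bullet> x')^2\<bar> = lam^2 * \<bar>(u \<bullet> x)^2 - (u \<bullet> x')^2\<bar>"
    by (simp add: abs_mult flip: right_diff_distrib)
  also have "\<dots> \<le> lam^2 * (2 * nu * d)"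
    using abs_power2_inner_diff_in_spherical_cap[OF unit x x'] unfolding d_def z_def z'_def
    by (rule mult_left_mono) simp
  finally have axial_part: "\<bar>lam^2 * (u \<bullet> x)^2 - lam^2 * (u \<bullet> x')^2\<bar> \<le> 2 * lam^2 * (nu * d)"
    by (simp add: mult_ac)
  show ?thesis
    using power2_norm_matrix[of x] power2_norm_matrix[of x'] perp_part axial_part
    unfolding d_def z_def z'_def by (simp add: mult_ac)
qed

end

locale perturbed_leading_eigenvector = leading_eigenvector M u lam L
  for M :: "real^'n^'n" and u lam L +
  fixes E :: "real^'n^'n" and theta nu :: real
  assumes perturbation: "\<And>w. norm (E *v w) \<le> theta * lam * norm w"
    and theta_pos: "0 < theta" and theta_le: "theta \<le> 1/40"
    and nu_nonneg: "0 \<le> nu" and nu_le: "nu \<le> 1/20"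
begin

definition kappa :: real where "kappa = 1 - 51/100 * nu^2 - theta"

lemma kappa_pos: "0 < kappa"
  using denominator_bounds(1)[OF theta_pos theta_le nu_nonneg nu_le kappa_def] by simp

lemma norm_perturbed_ge:
  assumes x: "x \<in> spherical_cap u nu"
  shows "lam * kappa \<le> norm ((M + E) *v x)"
proof -
  have "lam * (1 - 51/100 * nu^2) \<le> lam * (u \<bullet> x)"
    using inner_lower_bound_in_spherical_cap[OF unit x nu_le] lam_pos by simp
  also have "\<dots> \<le> norm (M *v x)"
    using norm_cauchy_schwarz[of u "M *v x"] unit by (simp add: inner_eigen)
  finally have "lam * (1 - 51/100 * nu^2) \<le> norm (M *v x)" .
  moreover have "norm (M *v x) - norm (E *v x) \<le> norm ((M + E) *v x)"
    unfolding matrix_vector_mult_add_rdistrib by (rule norm_diff_ineq)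
  moreover have "norm (E *v x) \<le> theta * lam"
    using perturbation[of x] x by (simp add: spherical_cap_def)
  moreover have "lam * kappa = lam * (1 - 51/100 * nu^2) - theta * lam"
    by (simp add: kappa_def algebra_simps)
  ultimately show ?thesis
    by linarith
qed

lemma norm_proj_uperp_perturbed_le:
  assumes x: "x \<in> spherical_cap u nu"
  shows "norm (proj_uperp u ((M + E) *v x)) \<le> lam * (L / lam * nu + theta)"
proof -
  have "proj_uperp u ((M + E) *v x) = M *v proj_uperp u x + proj_uperp u (E *v x)"
    by (simp add: matrix_vector_mult_add_rdistrib linear_add[OF linear_proj_uperp] proj_uperp_matrix)
  then have "norm (proj_uperp u ((M + E) *v x)) \<le> norm (M *v proj_uperp u x) + norm (proj_uperp u (E *v x))"
    by (simp add: norm_triangle_ineq)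
  also have "\<dots> \<le> L * nu + theta * lam"
    using norm_matrix_proj_uperp_in_spherical_cap[OF x] norm_proj_uperp_le[OF unit, of "E *v x"]
      perturbation[of x] x by (simp add: spherical_cap_def)
  also have "\<dots> = lam * (L / lam * nu + theta)"
    using lam_pos by (simp add: algebra_simps)
  finally show ?thesis .
qed

lemma norm_proj_uperp_perturbed_diff_le:
  "norm (proj_uperp u ((M + E) *v x - (M + E) *v x'))
    \<le> lam * (L / lam * norm (proj_uperp u x - proj_uperp u x') + theta * norm (x - x'))"
proof -
  let ?dz = "proj_uperp u x - proj_uperp u x'"
  have "(M + E) *v x - (M + E) *v x' = M *v (x - x') + E *v (x - x')"
    by (simp add: algebra_simps)
  then have "proj_uperp u ((M + E) *v x - (M + E) *v x') = M *v ?dz + proj_uperp u (E *v (x - x'))"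
    by (simp add: linear_add[OF linear_proj_uperp] linear_diff[OF linear_proj_uperp] proj_uperp_matrix)
  then have "norm (proj_uperp u ((M + E) *v x - (M + E) *v x'))
      \<le> norm (M *v ?dz) + norm (proj_uperp u (E *v (x - x')))"
    by (simp add: norm_triangle_ineq)
  also have "\<dots> \<le> L * norm ?dz + theta * lam * norm (x - x')"
  proof (rule add_mono)
    show "norm (M *v ?dz) \<le> L * norm ?dz"
      using inner_proj_uperp[OF unit] by (intro perp_bound) (simp add: inner_diff_right)
    show "norm (proj_uperp u (E *v (x - x'))) \<le> theta * lam * norm (x - x')"
      using norm_proj_uperp_le[OF unit] perturbation order_trans by blast
  qed
  also have "\<dots> = lam * (L / lam * norm ?dz + theta * norm (x - x'))"
    using lam_pos by (simp add: algebra_simps)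
  finally show ?thesis .
qed

lemma norm_proj_u_perturbed_diff_le:
  assumes x: "x \<in> spherical_cap u nu" and x': "x' \<in> spherical_cap u nu"
  shows "norm (proj_u u ((M + E) *v x - (M + E) *v x'))
    \<le> lam * (101/100 * nu * norm (proj_uperp u x - proj_uperp u x') + theta * norm (x - x'))"
proof -
  have "norm (proj_u u ((M + E) *v x - (M + E) *v x')) = \<bar>u \<bullet> (M *v (x - x')) + u \<bullet> (E *v (x - x'))\<bar>"
    using unit by (simp add: norm_proj_u algebra_simps inner_add_right)
  also have "\<dots> \<le> \<bar>u \<bullet> (M *v (x - x'))\<bar> + \<bar>u \<bullet> (E *v (x - x'))\<bar>"
    by (rule abs_triangle_ineq)
  also have "\<dots> \<le> lam * \<bar>u \<bullet> x - u \<bullet> x'\<bar> + norm (E *v (x - x'))"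
    using Cauchy_Schwarz_ineq2[of u "E *v (x - x')"] unit lam_pos
    by (intro add_mono) (simp_all add: inner_eigen inner_diff_right abs_mult)
  also have "\<dots> \<le> lam * (101/100 * nu * norm (proj_uperp u x - proj_uperp u x')) + theta * lam * norm (x - x')"
    using abs_inner_diff_in_spherical_cap[OF unit x x' nu_le] perturbation lam_pos
    by (intro add_mono mult_left_mono) auto
  finally show ?thesis
    by (simp add: algebra_simps)
qed

lemma abs_power2_norm_perturbed_diff_le:
  assumes x: "x \<in> spherical_cap u nu" and x': "x' \<in> spherical_cap u nu"
  defines "y \<equiv> (M + E) *v x" and "y' \<equiv> (M + E) *v x'"
  shows "\<bar>(norm y)^2 - (norm y')^2\<bar> \<le> 4 * lam^2 * nu * norm (proj_uperp u x - proj_uperp u x')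
    + 2 * theta * lam^2 * norm (x - x') + theta * lam * norm (x - x') * (norm y + norm y')"
proof -
  define D where "D = norm (x - x')"
  have Ex: "norm (E *v x) \<le> theta * lam" "norm (E *v x') \<le> theta * lam"
    using perturbation[of x] perturbation[of x'] x x' by (simp_all add: spherical_cap_def)
  have "\<bar>(norm y)^2 - (norm y')^2\<bar>
      \<le> \<bar>(norm (M *v x))^2 - (norm (M *v x'))^2\<bar> + norm (M *v x - M *v x') * norm (E *v x + E *v x')
        + norm (E *v x - E *v x') * norm (y + y')"
    using abs_norm_add_power2_diff_le[of "M *v x" "E *v x" "M *v x'" "E *v x'"]
    by (simp add: y_def y'_def matrix_vector_mult_add_rdistrib add.assoc)
  also have "\<dots> \<le> 4 * lam^2 * nu * norm (proj_uperp u x - proj_uperp u x') + (lam * D) * (2 * (theta * lam))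
      + (theta * lam * D) * (norm y + norm y')"
  proof (intro add_mono mult_mono)
    show "\<bar>(norm (M *v x))^2 - (norm (M *v x'))^2\<bar> \<le> 4 * lam^2 * nu * norm (proj_uperp u x - proj_uperp u x')"
      by (rule abs_power2_norm_matrix_diff_in_spherical_cap[OF x x'])
    show "norm (M *v x - M *v x') \<le> lam * D"
      using norm_matrix_le[of "x - x'"] by (simp add: D_def matrix_vector_mult_diff_distrib)
    show "norm (E *v x + E *v x') \<le> 2 * (theta * lam)"
      using norm_triangle_ineq[of "E *v x" "E *v x'"] Ex by linarith
    show "norm (E *v x - E *v x') \<le> theta * lam * D"
      using perturbation[of "x - x'"] by (simp add: D_def matrix_vector_mult_diff_distrib)
    show "norm (y + y') \<le> norm y + norm y'"
      by (rule norm_triangle_ineq)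
  qed (use lam_pos theta_pos in \<open>auto simp: D_def\<close>)
  also have "\<dots> = 4 * lam^2 * nu * norm (proj_uperp u x - proj_uperp u x')
      + 2 * theta * lam^2 * D + theta * lam * D * (norm y + norm y')"
    by (simp add: power2_eq_square mult_ac)
  finally show ?thesis
    by (simp add: D_def)
qed

text \<open>Going through the squared norms avoids a term of order L d: the squares of the norms of
  M x and M x' differ by O(lam^2 nu d), and the sum of the norms is at least 2 lam kappa.\<close>
lemma abs_norm_perturbed_diff_le:
  assumes x: "x \<in> spherical_cap u nu" and x': "x' \<in> spherical_cap u nu"
  defines "d \<equiv> norm (proj_uperp u x - proj_uperp u x')" and "D \<equiv> norm (x - x')"
  shows "\<bar>norm ((M + E) *v x) - norm ((M + E) *v x')\<bar> \<le> lam * ((2 * nu * d + theta * D) / kappa + theta * D)"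
proof -
  define y y' where "y = (M + E) *v x" and "y' = (M + E) *v x'"
  define S where "S = norm y + norm y'"
  have S_ge: "2 * (lam * kappa) \<le> S"
    using norm_perturbed_ge[OF x] norm_perturbed_ge[OF x'] by (simp add: S_def y_def y'_def)
  have S_pos: "0 < S"
    using S_ge mult_pos_pos[OF lam_pos kappa_pos] by linarith
  have "(norm y)^2 - (norm y')^2 = (norm y - norm y') * S"
    by (simp add: S_def power2_eq_square algebra_simps)
  then have "\<bar>norm y - norm y'\<bar> * S = \<bar>(norm y)^2 - (norm y')^2\<bar>"
    using S_pos by (simp add: abs_mult)
  also have "\<dots> \<le> (4 * lam^2 * nu * d + 2 * theta * lam^2 * D) + theta * lam * D * S"
    using abs_power2_norm_perturbed_diff_le[OF x x'] by (simp add: y_def y'_def d_def D_def S_def)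
  finally have "\<bar>norm y - norm y'\<bar> \<le> (4 * lam^2 * nu * d + 2 * theta * lam^2 * D) / S + theta * lam * D"
    using S_pos by (simp add: field_simps)
  also have "\<dots> \<le> (4 * lam^2 * nu * d + 2 * theta * lam^2 * D) / (2 * (lam * kappa)) + theta * lam * D"
    using S_ge S_pos lam_pos kappa_pos nu_nonneg theta_pos
    by (intro add_right_mono divide_left_mono) (auto simp: d_def D_def)
  also have "\<dots> = lam * ((2 * nu * d + theta * D) / kappa + theta * D)"
    using lam_pos kappa_pos by (simp add: field_simps power2_eq_square)
  finally show ?thesis
    by (simp add: y_def y'_def)
qed

lemma proj_uperp_normalized_perturbed_diff_le:
  assumes x: "x \<in> spherical_cap u nu" and x': "x' \<in> spherical_cap u nu"
  shows "norm (proj_uperp u ((1 / norm ((M + E) *v x)) *\<^sub>R ((M + E) *v x)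
      - (1 / norm ((M + E) *v x')) *\<^sub>R ((M + E) *v x')))
    \<le> (L / lam * (1 + 3 * nu^2) + 3 * theta) * norm (proj_uperp u x - proj_uperp u x')"
proof -
  define d D where "d = norm (proj_uperp u x - proj_uperp u x')" and "D = norm (x - x')"
  define l R where "l = L / lam" and "R = (2 * nu * d + theta * D) / kappa + theta * D"
  have l: "0 \<le> l" "l \<le> 1"
    using L_nonneg L_le_lam lam_pos by (simp_all add: l_def)
  have dD: "0 \<le> d" "0 \<le> D" "D \<le> 106/100 * d"
    using norm_diff_in_spherical_cap[OF unit x x' nu_le] by (simp_all add: d_def D_def)
  have ratio: "norm (proj_uperp u ((M + E) *v x')) \<le> ((l * nu + theta) / kappa) * norm ((M + E) *v x')"
  proof -
    have "norm (proj_uperp u ((M + E) *v x')) \<le> ((l * nu + theta) / kappa) * (lam * kappa)"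
      using norm_proj_uperp_perturbed_le[OF x'] kappa_pos by (simp add: l_def mult.commute)
    also have "\<dots> \<le> ((l * nu + theta) / kappa) * norm ((M + E) *v x')"
      using norm_perturbed_ge[OF x'] l nu_nonneg theta_pos kappa_pos by (intro mult_left_mono) auto
    finally show ?thesis .
  qed
  have "norm (proj_uperp u ((1 / norm ((M + E) *v x)) *\<^sub>R ((M + E) *v x)
      - (1 / norm ((M + E) *v x')) *\<^sub>R ((M + E) *v x')))
    \<le> (lam * (l * d + theta * D) + lam * R * ((l * nu + theta) / kappa)) / (lam * kappa)"
    using lam_pos kappa_pos norm_perturbed_ge[OF x] norm_perturbed_ge[OF x'] ratio
      norm_proj_uperp_perturbed_diff_le[of x x'] abs_norm_perturbed_diff_le[OF x x']
    by (intro norm_linear_normalized_diff_bound[OF linear_proj_uperp])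
      (simp_all add: linear_diff[OF linear_proj_uperp] l_def d_def D_def R_def)
  also have "\<dots> = (lam * ((l * d + theta * D) + R * ((l * nu + theta) / kappa))) / (lam * kappa)"
    by (simp add: algebra_simps)
  also have "\<dots> = ((l * d + theta * D) + R * ((l * nu + theta) / kappa)) / kappa"
    using lam_pos by simp
  also have "\<dots> \<le> (l * (1 + 3 * nu^2) + 3 * theta) * d"
    unfolding R_def by (rule perp_contraction_arith[OF l theta_pos theta_le nu_nonneg nu_le dD kappa_def])
  finally show ?thesis
    by (simp add: l_def d_def)
qed

lemma proj_u_normalized_perturbed_diff_le:
  assumes x: "x \<in> spherical_cap u nu" and x': "x' \<in> spherical_cap u nu"
  shows "norm (proj_u u ((1 / norm ((M + E) *v x)) *\<^sub>R ((M + E) *v x)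
      - (1 / norm ((M + E) *v x')) *\<^sub>R ((M + E) *v x')))
    \<le> (4 * nu + 4 * theta) * norm (proj_uperp u x - proj_uperp u x')"
proof -
  define d D where "d = norm (proj_uperp u x - proj_uperp u x')" and "D = norm (x - x')"
  define R where "R = (2 * nu * d + theta * D) / kappa + theta * D"
  have dD: "0 \<le> d" "0 \<le> D" "D \<le> 106/100 * d"
    using norm_diff_in_spherical_cap[OF unit x x' nu_le] by (simp_all add: d_def D_def)
  have "norm (proj_u u ((1 / norm ((M + E) *v x)) *\<^sub>R ((M + E) *v x)
      - (1 / norm ((M + E) *v x')) *\<^sub>R ((M + E) *v x')))
    \<le> (lam * (101/100 * nu * d + theta * D) + lam * R * 1) / (lam * kappa)"
    using lam_pos kappa_pos norm_perturbed_ge[OF x] norm_perturbed_ge[OF x'] norm_proj_u_le[OF unit]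
      norm_proj_u_perturbed_diff_le[OF x x'] abs_norm_perturbed_diff_le[OF x x']
    by (intro norm_linear_normalized_diff_bound[OF linear_proj_u])
      (simp_all add: linear_diff[OF linear_proj_u] d_def D_def R_def)
  also have "\<dots> = (lam * ((101/100 * nu * d + theta * D) + R)) / (lam * kappa)"
    by (simp add: algebra_simps)
  also have "\<dots> = ((101/100 * nu * d + theta * D) + R) / kappa"
    using lam_pos by simp
  also have "\<dots> \<le> (4 * nu + 4 * theta) * d"
    unfolding R_def by (rule axial_contraction_arith[OF theta_pos theta_le nu_nonneg nu_le dD kappa_def])
  finally show ?thesis
    by (simp add: d_def)
qed

end

theorem lemma6p1:
  fixes M Q :: "real^'n^'n" and u x x' :: "real^'n"
    and lam lam2 l2 theta nu :: real
  assumes symM: "transpose M = M"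
    and u_eig: "M *v u = lam *\<^sub>R u" and u_unit: "norm u = 1"
    and lam_pos: "lam > 0"
    and lam2_eig: "\<exists>v. v \<noteq> 0 \<and> u \<bullet> v = 0 \<and> M *v v = lam2 *\<^sub>R v"
    and lam2_max: "\<And>mu v. v \<noteq> 0 \<Longrightarrow> u \<bullet> v = 0 \<Longrightarrow> M *v v = mu *\<^sub>R v \<Longrightarrow> \<bar>mu\<bar> \<le> \<bar>lam2\<bar>"
    and gap: "lam > \<bar>lam2\<bar>"
    and l2_def: "l2 = \<bar>lam2\<bar> / lam"
    and theta_pos: "0 < theta"
    and theta_le: "theta \<le> (1/40) * (1 - l2) powr (3/2)"
    and Q_close: "opnorm (Q - M) \<le> theta * opnorm M"
    and nu_le: "nu \<le> 1/20"
    and x_unit: "norm x = 1" and x'_unit: "norm x' = 1"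
    and x_pos: "u \<bullet> x \<ge> 0" and x'_pos: "u \<bullet> x' \<ge> 0"
    and x_near: "norm (proj_uperp u x) \<le> nu"
    and x'_near: "norm (proj_uperp u x') \<le> nu"
  shows "norm (proj_uperp u ((1 / norm (Q *v x)) *\<^sub>R (Q *v x) - (1 / norm (Q *v x')) *\<^sub>R (Q *v x')))
           \<le> (l2 * (1 + 3 * nu^2) + 3 * theta) * norm (proj_uperp u x - proj_uperp u x')
       \<and> norm (proj_u u ((1 / norm (Q *v x)) *\<^sub>R (Q *v x) - (1 / norm (Q *v x')) *\<^sub>R (Q *v x')))
           \<le> (4 * nu + 4 * theta) * norm (proj_uperp u x - proj_uperp u x')"
proof -
  interpret leading_eigenvector M u lam "\<bar>lam2\<bar>"
    using symM u_eig u_unit lam_pos gap symmetric_perp_eigen_bound[OF symM u_eig lam2_max]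
    by unfold_locales auto
  have "(1 - l2) powr (3/2) \<le> 1"
    using gap lam_pos by (intro powr_le1) (auto simp: l2_def)
  then have "theta \<le> 1/40"
    using theta_le by simp
  moreover have "norm ((Q - M) *v w) \<le> theta * lam * norm w" for w
  proof -
    have "norm ((Q - M) *v w) \<le> opnorm (Q - M) * norm w"
      unfolding opnorm_def by (rule onorm[OF matrix_vector_mul_bounded_linear])
    also have "\<dots> \<le> theta * lam * norm w"
      using Q_close opnorm_le theta_pos by (intro mult_right_mono) (auto intro: order_trans mult_left_mono)
    finally show ?thesis .
  qed
  moreover have "0 \<le> nu"
    using x_near norm_ge_zero order_trans by blast
  ultimately interpret perturbed_leading_eigenvector M u lam "\<bar>lam2\<bar>" "Q - M" theta nu
    using theta_pos nu_le by unfold_locales auto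
  have "x \<in> spherical_cap u nu" "x' \<in> spherical_cap u nu"
    using x_unit x'_unit x_pos x'_pos x_near x'_near by (simp_all add: spherical_cap_def)
  then show ?thesis
    using proj_uperp_normalized_perturbed_diff_le proj_u_normalized_perturbed_diff_le by (simp add: l2_def)
qed

end
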